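(* For $n\ge 2$, the quantity $|\mathcal{I}^{(n)}_{p_k}(P_n^* )|$, as $k$ ranges over $1\le k\le n$, is maximized at $k=2$ and at $k=n-1$.
   Context: $\mathcal{I}^{(r)}_v(G)$ denotes the family of independent $r$-sets (sets of $r$ pairwise non-adjacent vertices) of a graph $G$ containing the vertex $v$. For a graph $G$ with vertices $x_1,\dots,x_n$, the pendant graph $G^*$ has vertex set $\{x_1,\dots,x_n\}\sqcup\{p_1,\dots,p_n\}$ and edge set $E(G)\sqcup\{x_1p_1,\dots,x_np_n\}$. $P_n$ is the path with vertices $x_1,\dots,x_n$ and edges $x_jx_{j+1}$, and $P_n^*$ its pendant graph. *)

theory Defs
  imports Main
begin

text \<open>A (simple) graph is given by a vertex set V and a symmetric, irreflexive adjacency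
predicate adj.  The family of independent r-sets of (V, adj) containing v:\<close>
definition indep_sets_containing ::
  "'a set \<Rightarrow> ('a \<Rightarrow> 'a \<Rightarrow> bool) \<Rightarrow> nat \<Rightarrow> 'a \<Rightarrow> 'a set set" where
  "indep_sets_containing V adj r v =
     {S. S \<subseteq> V \<and> card S = r \<and> v \<in> S \<and> (\<forall>x\<in>S. \<forall>y\<in>S. \<not> adj x y)}"

text \<open>Pendant graph G*: vertices Inl x (the original x) and Inr x (the pendant p_x);
edges of G plus x p_x for each x.\<close>
definition pendant_vertices :: "'a set \<Rightarrow> ('a + 'a) set" where
  "pendant_vertices V = V <+> V"

fun pendant_adj :: "('a \<Rightarrow> 'a \<Rightarrow> bool) \<Rightarrow> 'a + 'a \<Rightarrow> 'a + 'a \<Rightarrow> bool" where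
  "pendant_adj adj (Inl a) (Inl b) = adj a b"
| "pendant_adj adj (Inl a) (Inr b) = (a = b)"
| "pendant_adj adj (Inr a) (Inl b) = (a = b)"
| "pendant_adj adj (Inr a) (Inr b) = False"

definition path_vertices :: "nat \<Rightarrow> nat set" where
  "path_vertices n = {1..n}"

definition path_adj :: "nat \<Rightarrow> nat \<Rightarrow> bool" where
  "path_adj i j = (j = i + 1 \<or> i = j + 1)"

definition pendant_path_count :: "nat \<Rightarrow> nat \<Rightarrow> nat" where
  "pendant_path_count n k =
     card (indep_sets_containing (pendant_vertices (path_vertices n)) (pendant_adj path_adj) n (Inr k))"

end

theory Submission
  imports Defs "HOL-Number_Theory.Fib"
begin

text \<open>An independent set of size n in the pendant graph G* of an n-vertex graph G contains
exactly one of x and p_x for every vertex x, so it is determined by its trace A on G, which can be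
any independent set of G; it contains p_k iff k is not in A. For G = P_n, deleting k splits the
path into P_(k-1) and P_(n-k), whose independent sets are counted by Fibonacci numbers. Hence the
count is F(k+1) F(n-k+2), and F(a+2) F(b+2) <= 2 F(a+b+1) with equality for a = 1 or b = 1.\<close>

definition indep_subsets :: "'a set \<Rightarrow> ('a \<Rightarrow> 'a \<Rightarrow> bool) \<Rightarrow> 'a set set" where
  "indep_subsets V adj = {A. A \<subseteq> V \<and> (\<forall>x\<in>A. \<forall>y\<in>A. \<not> adj x y)}"

lemma finite_indep_subsets: "finite V \<Longrightarrow> finite (indep_subsets V adj)"
  by (rule finite_subset[of _ "Pow V"]) (auto simp: indep_subsets_def)

lemma card_Plus_image:
  assumes "finite A" "finite B"
  shows "card (Inl ` A \<union> Inr ` B) = card A + card B"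
  using assms by (subst card_Un_disjoint) (auto simp: card_image)

lemma pendant_indep_set_eq:
  assumes "finite V"
    and S: "S \<subseteq> V <+> V" "card S = card V" "\<forall>x\<in>S. \<forall>y\<in>S. \<not> pendant_adj adj x y"
  shows "S = Inl ` (Inl -` S) \<union> Inr ` (V - Inl -` S)"
proof -
  define A where "A = Inl -` S"
  define B where "B = Inr -` S"
  have AB: "A \<subseteq> V" "B \<subseteq> V" using S(1) by (auto simp: A_def B_def)
  have S_eq: "S = Inl ` A \<union> Inr ` B"
  proof
    show "S \<subseteq> Inl ` A \<union> Inr ` B"
    proof
      fix x assume "x \<in> S"
      then show "x \<in> Inl ` A \<union> Inr ` B" by (cases x) (auto simp: A_def B_def)
    qed
  qed (auto simp: A_def B_def)
  have "\<not> pendant_adj adj (Inl x) (Inr x)" if "Inl x \<in> S" "Inr x \<in> S" for x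
    using S(3) that by blast
  then have "A \<inter> B = {}" by (auto simp: A_def B_def)
  moreover have fin: "finite A" "finite B" using AB assms(1) finite_subset by auto
  ultimately have "card (A \<union> B) = card V"
    using S(2) S_eq card_Plus_image[OF fin] card_Un_disjoint[OF fin] by simp
  then have "A \<union> B = V" using AB assms(1) by (intro card_subset_eq) auto
  with \<open>A \<inter> B = {}\<close> have "B = V - A" by blast
  with S_eq show ?thesis unfolding A_def by simp
qed

lemma card_pendant_indep_sets:
  assumes "finite V" "v \<in> V"
  shows "card (indep_sets_containing (pendant_vertices V) (pendant_adj adj) (card V) (Inr v))
       = card (indep_subsets (V - {v}) adj)"
proof -
  let ?I = "indep_sets_containing (pendant_vertices V) (pendant_adj adj) (card V) (Inr v)"
  let ?lift = "\<lambda>A. Inl ` A \<union> Inr ` (V - A)"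
  have lift_eq: "S = ?lift (Inl -` S)" if "S \<in> ?I" for S
    using that by (intro pendant_indep_set_eq[OF assms(1)])
      (auto simp: indep_sets_containing_def pendant_vertices_def)
  have "bij_betw (\<lambda>S. Inl -` S) ?I (indep_subsets (V - {v}) adj)"
  proof (rule bij_betw_byWitness[where f' = ?lift])
    show "\<forall>S\<in>?I. ?lift (Inl -` S) = S" using lift_eq by auto
    show "\<forall>A\<in>indep_subsets (V - {v}) adj. Inl -` ?lift A = A"
      by (auto simp: indep_subsets_def)
    show "(\<lambda>S. Inl -` S) ` ?I \<subseteq> indep_subsets (V - {v}) adj"
    proof clarify
      fix S assume S: "S \<in> ?I"
      then have "Inr v \<in> ?lift (Inl -` S)" "S \<subseteq> V <+> V"
        "\<forall>x\<in>S. \<forall>y\<in>S. \<not> pendant_adj adj x y"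
        using lift_eq[OF S] by (auto simp: indep_sets_containing_def pendant_vertices_def)
      then show "Inl -` S \<in> indep_subsets (V - {v}) adj"
        by (force simp: indep_subsets_def)
    qed
    show "?lift ` indep_subsets (V - {v}) adj \<subseteq> ?I"
    proof clarify
      fix A assume A: "A \<in> indep_subsets (V - {v}) adj"
      then have "A \<subseteq> V" "finite A" using assms(1) finite_subset by (auto simp: indep_subsets_def)
      then have "card (?lift A) = card V"
        using card_Plus_image[of A "V - A"] assms(1) by (simp add: card_Diff_subset card_mono)
      moreover have "\<forall>x\<in>?lift A. \<forall>y\<in>?lift A. \<not> pendant_adj adj x y"
        using A by (auto simp: indep_subsets_def)
      ultimately show "?lift A \<in> ?I"
        using A assms(2) by (auto simp: indep_sets_containing_def pendant_vertices_def indep_subsets_def)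
    qed
  qed
  then show ?thesis by (rule bij_betw_same_card)
qed

lemma card_indep_subsets_Un:
  assumes "X \<inter> Y = {}" and no_edges: "\<forall>x\<in>X. \<forall>y\<in>Y. \<not> adj x y \<and> \<not> adj y x"
  shows "card (indep_subsets (X \<union> Y) adj) = card (indep_subsets X adj) * card (indep_subsets Y adj)"
proof -
  have "bij_betw (\<lambda>A. (A \<inter> X, A \<inter> Y)) (indep_subsets (X \<union> Y) adj)
          (indep_subsets X adj \<times> indep_subsets Y adj)"
  proof (rule bij_betw_byWitness[where f' = "\<lambda>(B, C). B \<union> C"])
    show "\<forall>BC\<in>indep_subsets X adj \<times> indep_subsets Y adj.
            (\<lambda>A. (A \<inter> X, A \<inter> Y)) ((\<lambda>(B, C). B \<union> C) BC) = BC"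
    proof
      fix BC assume "BC \<in> indep_subsets X adj \<times> indep_subsets Y adj"
      then obtain B C where "BC = (B, C)" "B \<subseteq> X" "C \<subseteq> Y"
        by (auto simp: indep_subsets_def)
      with assms(1) show "(\<lambda>A. (A \<inter> X, A \<inter> Y)) ((\<lambda>(B, C). B \<union> C) BC) = BC" by auto
    qed
    show "(\<lambda>(B, C). B \<union> C) ` (indep_subsets X adj \<times> indep_subsets Y adj) \<subseteq> indep_subsets (X \<union> Y) adj"
    proof clarify
      fix B C assume "B \<in> indep_subsets X adj" "C \<in> indep_subsets Y adj"
      then show "B \<union> C \<in> indep_subsets (X \<union> Y) adj"
        using no_edges unfolding indep_subsets_def by blast
    qed
  qed (auto simp: indep_subsets_def)
  then show ?thesis by (simp add: bij_betw_same_card card_cartesian_product)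
qed

lemma indep_subsets_path_Suc_Suc:
  "indep_subsets {s..<s + Suc (Suc m)} path_adj
     = indep_subsets {Suc s..<Suc s + Suc m} path_adj
       \<union> insert s ` indep_subsets {Suc (Suc s)..<Suc (Suc s) + m} path_adj"
    (is "?L = ?R1 \<union> insert s ` ?R2")
proof
  show "?L \<subseteq> ?R1 \<union> insert s ` ?R2"
  proof
    fix A assume A: "A \<in> ?L"
    show "A \<in> ?R1 \<union> insert s ` ?R2"
    proof (cases "s \<in> A")
      case True
      then have "Suc s \<notin> A" using A by (force simp: indep_subsets_def path_adj_def)
      have "A - {s} \<subseteq> {Suc (Suc s)..<Suc (Suc s) + m}"
      proof
        fix x assume x: "x \<in> A - {s}"
        then have "s \<le> x" "x < s + Suc (Suc m)" using A by (auto simp: indep_subsets_def)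
        moreover have "x \<noteq> s" "x \<noteq> Suc s" using x \<open>Suc s \<notin> A\<close> by auto
        ultimately show "x \<in> {Suc (Suc s)..<Suc (Suc s) + m}" by simp
      qed
      then have "A - {s} \<in> ?R2"
        using A by (auto simp: indep_subsets_def)
      moreover have "A = insert s (A - {s})" using True by auto
      ultimately show ?thesis by blast
    next
      case False
      have "A \<subseteq> {Suc s..<Suc s + Suc m}"
      proof
        fix x assume x: "x \<in> A"
        then have "s \<le> x" "x < s + Suc (Suc m)" using A by (auto simp: indep_subsets_def)
        moreover have "x \<noteq> s" using x False by auto
        ultimately show "x \<in> {Suc s..<Suc s + Suc m}" by simp
      qed
      then have "A \<in> ?R1" using A by (auto simp: indep_subsets_def)
      then show ?thesis by blast
    qed
  qed
  show "?R1 \<union> insert s ` ?R2 \<subseteq> ?L"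
    by (auto simp: indep_subsets_def path_adj_def)
qed

lemma card_indep_subsets_path: "card (indep_subsets {s..<s + m} path_adj) = fib (m + 2)"
proof (induction m arbitrary: s rule: fib.induct)
  case 1
  have "indep_subsets {s..<s + 0} path_adj = {{}}" by (auto simp: indep_subsets_def)
  then show ?case by simp
next
  case 2
  have "indep_subsets {s..<s + Suc 0} path_adj = {{}, {s}}"
    by (auto simp: indep_subsets_def path_adj_def)
  then show ?case by (simp add: numeral_3_eq_3)
next
  case (3 m)
  let ?R1 = "indep_subsets {Suc s..<Suc s + Suc m} path_adj"
  let ?R2 = "indep_subsets {Suc (Suc s)..<Suc (Suc s) + m} path_adj"
  have "s \<notin> A" if "A \<in> ?R2" for A
    using that by (auto simp: indep_subsets_def)
  then have "inj_on (insert s) ?R2"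
    by (meson inj_onI insert_ident)
  moreover have "?R1 \<inter> insert s ` ?R2 = {}"
    by (auto simp: indep_subsets_def)
  ultimately have "card (indep_subsets {s..<s + Suc (Suc m)} path_adj) = card ?R1 + card ?R2"
    unfolding indep_subsets_path_Suc_Suc
    by (simp add: card_Un_disjoint card_image finite_indep_subsets)
  also have "\<dots> = fib (Suc m + 2) + fib (m + 2)"
    by (simp only: "3.IH")
  finally show ?case by simp
qed

lemma pendant_path_count_eq:
  assumes "k \<in> {1..n}"
  shows "pendant_path_count n k = fib (k + 1) * fib (n - k + 2)"
proof -
  have split: "{1..n} - {k} = {1..<1 + (k - 1)} \<union> {Suc k..<Suc k + (n - k)}"
    using assms by auto
  have "pendant_path_count n k = card (indep_subsets ({1..n} - {k}) path_adj)"
    using card_pendant_indep_sets[of "{1..n}" k path_adj] assms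
    by (simp add: pendant_path_count_def path_vertices_def)
  also have "\<dots> = card (indep_subsets {1..<1 + (k - 1)} path_adj)
                   * card (indep_subsets {Suc k..<Suc k + (n - k)} path_adj)"
    unfolding split by (rule card_indep_subsets_Un) (auto simp: path_adj_def)
  also have "\<dots> = fib (k - 1 + 2) * fib (n - k + 2)"
    by (simp only: card_indep_subsets_path)
  also have "k - 1 + 2 = k + 1" using assms by simp
  finally show ?thesis .
qed

lemma fib_mult_le: "fib (a + 2) * fib (b + 2) \<le> 2 * fib (a + b + 1)"
proof (induction a rule: fib.induct)
  case 1
  show ?case using fib_Suc_mono[of b] by (simp add: fib_plus_2)
next
  case 2
  show ?case by (simp add: numeral_3_eq_3)
next
  case (3 a)
  have "fib (Suc (Suc a) + 2) * fib (b + 2) = fib (Suc a + 2) * fib (b + 2) + fib (a + 2) * fib (b + 2)"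
    by (simp add: numeral_2_eq_2 algebra_simps)
  also have "\<dots> \<le> 2 * fib (Suc a + b + 1) + 2 * fib (a + b + 1)"
    using "3.IH" by (intro add_mono) auto
  also have "\<dots> = 2 * fib (Suc (Suc a) + b + 1)"
    by simp
  finally show ?case .
qed

theorem corollary1:
  fixes n :: nat
  assumes "n \<ge> 2"
  shows "\<forall>k\<in>{1..n}. pendant_path_count n k \<le> pendant_path_count n 2
                   \<and> pendant_path_count n k \<le> pendant_path_count n (n - 1)"
proof
  fix k assume k: "k \<in> {1..n}"
  have "pendant_path_count n k = fib (k - 1 + 2) * fib (n - k + 2)"
    using pendant_path_count_eq[OF k] k by (simp del: fib.simps)
  also have "\<dots> \<le> 2 * fib (k - 1 + (n - k) + 1)"
    by (rule fib_mult_le)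
  also have "k - 1 + (n - k) + 1 = n"
    using k by simp
  finally have "pendant_path_count n k \<le> 2 * fib n" .
  moreover have "pendant_path_count n 2 = fib 3 * fib (n - 2 + 2)"
    using pendant_path_count_eq[of 2 n] assms by (simp del: fib.simps)
  moreover have "pendant_path_count n (n - 1) = fib (n - 1 + 1) * fib (n - (n - 1) + 2)"
    using assms by (intro pendant_path_count_eq) simp
  moreover have "n - 2 + 2 = n" "n - 1 + 1 = n" "n - (n - 1) + 2 = 3"
    using assms by simp_all
  moreover have "fib 3 = 2"
    by (simp add: numeral_3_eq_3)
  ultimately show "pendant_path_count n k \<le> pendant_path_count n 2
                   \<and> pendant_path_count n k \<le> pendant_path_count n (n - 1)"
    by (simp only: mult.commute)
qed

end
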